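(* Let $\mu$ be a shift-invariant Borel probability measure on $\Sigma^\mathbb{Z}$ and for $c,d\in\mathtt{CA}$ define $\delta^\mu_B(c,d)=\int_{\Sigma^\mathbb{Z}}d_B(c(x),d(x))\,d\mu(x)$. Then $\delta^\mu_B(c,d)=\delta^\mu(c,d)$ for all $c,d\in\mathtt{CA}$.
   Context: $\Sigma$ is a finite alphabet with $|\Sigma|\ge2$. A cellular automaton (CA) is a continuous map $\Sigma^\mathbb{Z}\to\Sigma^\mathbb{Z}$ commuting with the shift $\sigma(x)_i=x_{i+1}$; $\mathtt{CA}$ is the set of all CA. The Besicovitch distance is $d_B(x,y)=\limsup_{n\to\infty}\frac{|\{i:|i|\le n,\ x_i\ne y_i\}|}{2n+1}$. $\mu$ is shift-invariant if $\mu(\sigma(C))=\mu(C)$ for all Borel $C$. $\delta^\mu(c,d)=\mu(\{x\mid c(x)_0\ne d(x)_0\})$. *)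

theory Defs
  imports "HOL-Probability.Probability"
begin

definition shift_top :: "(int \<Rightarrow> 'a) topology" where
  "shift_top = product_topology (\<lambda>_. discrete_topology UNIV) UNIV"

definition shift :: "(int \<Rightarrow> 'a) \<Rightarrow> (int \<Rightarrow> 'a)" where
  "shift x = (\<lambda>i. x (i + 1))"

definition is_CA :: "((int \<Rightarrow> 'a) \<Rightarrow> (int \<Rightarrow> 'a)) \<Rightarrow> bool" where
  "is_CA F \<longleftrightarrow> continuous_map shift_top shift_top F \<and> (\<forall>x. F (shift x) = shift (F x))"

definition shift_borel :: "(int \<Rightarrow> 'a) set set" where
  "shift_borel = sigma_sets UNIV {U. openin shift_top U}"

definition besicovitch :: "(int \<Rightarrow> 'a) \<Rightarrow> (int \<Rightarrow> 'a) \<Rightarrow> real" where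
  "besicovitch x y = real_of_ereal (limsup (\<lambda>n::nat.
      ereal (real (card {i::int. \<bar>i\<bar> \<le> int n \<and> x i \<noteq> y i}) / (2 * real n + 1))))"

definition shift_invariant :: "(int \<Rightarrow> 'a) measure \<Rightarrow> bool" where
  "shift_invariant M \<longleftrightarrow> (\<forall>C \<in> sets M. emeasure M (shift ` C) = emeasure M C)"

end

theory Submission
  imports Defs
begin

text \<open>
  Let E be the set of configurations x with c x 0 \<noteq> d x 0 and g its indicator.
  Since c and d commute with the shift, the density of disagreements of c x and d x on the
  window [-n, n] is a two-sided ergodic average of g along the orbit of x, so
  besicovitch (c x) (d x) is the limsup of these averages. No ergodicity is assumed, and
  none is needed: for a measure-preserving map T the integral of the limsup of the Birkhoff
  averages of a [0,1]-valued function g is at most the integral of g (a maximal inequality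
  proved by a covering of orbit segments by good blocks). A two-sided average is eventually
  bounded by the mean of the forward and backward averages, so the same bound holds for the
  two-sided limsup; applied to 1 - g as well, and using that the two limsups add up to at
  least 1, it turns into an equality.
\<close>

text \<open>The limsup of a real sequence as a real number; it is used for [0,1]-valued
  sequences only, where no information is lost.\<close>
definition Lsup :: "(nat \<Rightarrow> real) \<Rightarrow> real" where
  "Lsup u = real_of_ereal (limsup (\<lambda>n. ereal (u n)))"

lemma Lsup_ereal:
  assumes "\<And>n. 0 \<le> u n \<and> u n \<le> 1"
  shows "limsup (\<lambda>n. ereal (u n)) = ereal (Lsup u)" "0 \<le> Lsup u" "Lsup u \<le> 1"
proof -
  have "limsup (\<lambda>n. ereal (u n)) \<le> ereal 1"
    by (rule Limsup_bounded) (use assms in auto)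
  moreover have "ereal 0 \<le> limsup (\<lambda>n. ereal (u n))"
    by (rule le_Limsup) (use assms in auto)
  ultimately obtain r where "limsup (\<lambda>n. ereal (u n)) = ereal r" "0 \<le> r" "r \<le> 1"
    by (cases "limsup (\<lambda>n. ereal (u n))") auto
  then show "limsup (\<lambda>n. ereal (u n)) = ereal (Lsup u)" "0 \<le> Lsup u" "Lsup u \<le> 1"
    by (auto simp: Lsup_def)
qed

lemma Lsup_le:
  assumes "\<And>n. 0 \<le> u n \<and> u n \<le> 1" and "eventually (\<lambda>n. u n \<le> C) sequentially"
  shows "Lsup u \<le> C"
proof -
  have "limsup (\<lambda>n. ereal (u n)) \<le> ereal C"
    by (rule Limsup_bounded) (use assms(2) in \<open>auto elim: eventually_mono\<close>)
  then show ?thesis using Lsup_ereal(1)[OF assms(1)] by simp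
qed

lemma Lsup_less:
  assumes "\<And>n. 0 \<le> u n \<and> u n \<le> 1" and "Lsup u < C"
  shows "eventually (\<lambda>n. u n < C) sequentially"
proof -
  have "limsup (\<lambda>n. ereal (u n)) < ereal C" using Lsup_ereal(1)[OF assms(1)] assms(2) by simp
  from Limsup_lessD[OF this] show ?thesis by (auto elim: eventually_mono)
qed

lemma Lsup_frequently_close:
  assumes "\<And>n. 0 \<le> u n \<and> u n \<le> 1" and "e > 0"
  shows "\<exists>n\<ge>1. u n \<ge> Lsup u - e"
proof (rule ccontr)
  assume "\<not> ?thesis"
  then have "eventually (\<lambda>n. u n \<le> Lsup u - e) sequentially"
    by (intro eventually_sequentiallyI[of 1]) auto
  then have "Lsup u \<le> Lsup u - e" by (rule Lsup_le[OF assms(1)])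
  then show False using assms(2) by simp
qed

lemma Lsup_mono_approx:
  assumes "\<And>n. 0 \<le> u n \<and> u n \<le> 1" "\<And>n. 0 \<le> v n \<and> v n \<le> 1"
    and "\<And>e. e > 0 \<Longrightarrow> eventually (\<lambda>n. u n \<le> v n + e) sequentially"
  shows "Lsup u \<le> Lsup v"
proof (rule field_le_epsilon)
  fix e :: real assume e: "e > 0"
  have "eventually (\<lambda>n. v n < Lsup v + e/2) sequentially"
    by (rule Lsup_less[OF assms(2)]) (use e in simp)
  moreover have "eventually (\<lambda>n. u n \<le> v n + e/2) sequentially" using assms(3) e by simp
  ultimately have "eventually (\<lambda>n. u n \<le> Lsup v + e) sequentially"
    by eventually_elim simp
  then show "Lsup u \<le> Lsup v + e" by (rule Lsup_le[OF assms(1)])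
qed

lemma Lsup_complement_ge1:
  assumes "\<And>n. 0 \<le> u n \<and> u n \<le> 1" "\<And>n. 0 \<le> v n \<and> v n \<le> 1"
    and "\<And>n. u n + v n = 1"
  shows "1 \<le> Lsup u + Lsup v"
proof (rule ccontr)
  assume "\<not> ?thesis"
  then obtain e where e: "e > 0" "Lsup u + Lsup v + 2 * e = 1"
    by (intro that[of "(1 - Lsup u - Lsup v)/2"]) (auto simp: field_simps)
  have "eventually (\<lambda>n. u n < Lsup u + e) sequentially"
    by (rule Lsup_less[OF assms(1)]) (use e in simp)
  moreover have "eventually (\<lambda>n. v n < Lsup v + e) sequentially"
    by (rule Lsup_less[OF assms(2)]) (use e in simp)
  ultimately have "eventually (\<lambda>n. False) sequentially"
  proof eventually_elim
    case (elim n)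
    then show False using assms(3)[of n] e by linarith
  qed
  then show False by simp
qed

lemma Lsup_borel_measurable:
  assumes "\<And>n. (\<lambda>x. u x n) \<in> borel_measurable M"
  shows "(\<lambda>x. Lsup (u x)) \<in> borel_measurable M"
  unfolding Lsup_def using assms by measurable

definition birkhoff_avg :: "('x \<Rightarrow> 'x) \<Rightarrow> ('x \<Rightarrow> real) \<Rightarrow> 'x \<Rightarrow> nat \<Rightarrow> real" where
  "birkhoff_avg T g x n = (\<Sum>i<n. g ((T^^i) x)) / real n"

lemma birkhoff_avg_bounds:
  assumes "\<And>x. 0 \<le> g x \<and> g x \<le> 1"
  shows "0 \<le> birkhoff_avg T g x n \<and> birkhoff_avg T g x n \<le> 1"
proof -
  have "(\<Sum>i<n. g ((T^^i) x)) \<le> (\<Sum>i<n. 1)" by (rule sum_mono) (use assms in auto)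
  moreover have "0 \<le> (\<Sum>i<n. g ((T^^i) x))" by (rule sum_nonneg) (use assms in auto)
  ultimately show ?thesis unfolding birkhoff_avg_def by (auto simp: divide_le_eq)
qed

lemma birkhoff_avg_step:
  assumes "\<And>x. 0 \<le> g x \<and> g x \<le> 1"
  shows "\<bar>birkhoff_avg T g (T x) n - birkhoff_avg T g x n\<bar> \<le> 1 / real n"
proof -
  have "(\<Sum>i<n. g ((T^^i) (T x))) + g x = (\<Sum>i<Suc n. g ((T^^i) x))"
    by (subst sum.lessThan_Suc_shift) (simp add: funpow_Suc_right del: funpow.simps)
  also have "\<dots> = (\<Sum>i<n. g ((T^^i) x)) + g ((T^^n) x)" by simp
  finally have "\<bar>(\<Sum>i<n. g ((T^^i) (T x))) - (\<Sum>i<n. g ((T^^i) x))\<bar> \<le> 1"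
    using assms[of x] assms[of "(T^^n) x"] by linarith
  then show ?thesis unfolding birkhoff_avg_def
    by (cases "n = 0") (auto simp: diff_divide_distrib[symmetric] abs_divide divide_right_mono)
qed

lemma Lsup_birkhoff_avg_invariant:
  assumes g: "\<And>x. 0 \<le> g x \<and> g x \<le> 1"
  shows "Lsup (birkhoff_avg T g (T x)) = Lsup (birkhoff_avg T g x)"
proof -
  have close: "eventually (\<lambda>n. \<bar>birkhoff_avg T g (T x) n - birkhoff_avg T g x n\<bar> \<le> e)
      sequentially" if "e > 0" for e
    using order_tendstoD(2)[OF lim_const_over_n[of 1] that]
  proof eventually_elim
    case (elim n)
    then show ?case using birkhoff_avg_step[where g=g and T=T and x=x and n=n, OF g] by simp
  qed
  show ?thesis
    by (rule antisym;
        rule Lsup_mono_approx[OF birkhoff_avg_bounds[OF g] birkhoff_avg_bounds[OF g]])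
       (use close in \<open>force elim: eventually_mono\<close>)+
qed

lemma sum_lessThan_add: "(\<Sum>i<k+m. f i) = (\<Sum>i<k. f i) + (\<Sum>i<m. f (k+i))"
  for f :: "nat \<Rightarrow> real"
  by (induction m) (auto simp: add.commute)

lemma block_covering:
  fixes \<phi> c :: "'x \<Rightarrow> real" and T :: "'x \<Rightarrow> 'x" and N :: nat
  assumes phi: "\<And>x. \<phi> x \<ge> 0" and cpos: "\<And>x. c x \<ge> 0" and cinv: "\<And>x. c (T x) = c x"
    and blocks: "\<And>x. \<exists>k. 1 \<le> k \<and> k \<le> N \<and> (\<Sum>i<k. \<phi> ((T^^i) x)) \<ge> real k * c x"
  shows "(\<Sum>i<L. \<phi> ((T^^i) x)) \<ge> (real L - real N) * c x"
proof (induction L arbitrary: x rule: less_induct)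
  case (less L)
  show ?case
  proof (cases "L \<le> N")
    case True
    have "(real L - real N) * c x \<le> 0" using True cpos[of x] by (simp add: mult_nonpos_nonneg)
    also have "0 \<le> (\<Sum>i<L. \<phi> ((T^^i) x))" by (rule sum_nonneg) (use phi in auto)
    finally show ?thesis .
  next
    case False
    obtain k where k: "1 \<le> k" "k \<le> N" "(\<Sum>i<k. \<phi> ((T^^i) x)) \<ge> real k * c x"
      using blocks by blast
    define y where "y = (T^^k) x"
    have IH: "(\<Sum>i<L-k. \<phi> ((T^^i) y)) \<ge> (real (L-k) - real N) * c y"
      using less.IH[of "L-k" y] k False by auto
    have "c y = c x" unfolding y_def by (induction k) (simp_all add: cinv)
    moreover have "(\<Sum>i<L. \<phi> ((T^^i) x)) = (\<Sum>i<k. \<phi> ((T^^i) x)) + (\<Sum>i<L-k. \<phi> ((T^^i) y))"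
      using sum_lessThan_add[of "\<lambda>i. \<phi> ((T^^i) x)" k "L - k"] False k(2)
      by (simp add: y_def funpow_add add.commute)
    moreover have "real (L - k) = real L - real k" using False k by simp
    ultimately show ?thesis using IH k(3) by (simp add: algebra_simps)
  qed
qed

context prob_space
begin

lemma integrable_unit_interval:
  fixes f :: "'a \<Rightarrow> real"
  assumes "f \<in> borel_measurable M" "\<And>x. 0 \<le> f x \<and> f x \<le> 1"
  shows "integrable M f"
  by (rule integrable_const_bound[where B=1]) (use assms in auto)

lemma integral_funpow_preserving:
  fixes f :: "'a \<Rightarrow> real"
  assumes T: "T \<in> M \<rightarrow>\<^sub>M M" and pres: "distr M M T = M" and f: "f \<in> borel_measurable M"
  shows "(\<integral>x. f ((T^^i) x) \<partial>M) = (\<integral>x. f x \<partial>M)"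
proof (induction i)
  case (Suc i)
  have m: "(\<lambda>x. f ((T^^i) x)) \<in> borel_measurable M"
    using measurable_compose[OF measurable_compose_n[OF T] f] by (simp add: comp_def)
  have "(\<integral>x. f ((T^^Suc i) x) \<partial>M) = (\<integral>x. (\<lambda>y. f ((T^^i) y)) (T x) \<partial>M)"
    by (simp add: funpow_Suc_right del: funpow.simps)
  also have "\<dots> = (\<integral>y. f ((T^^i) y) \<partial>distr M M T)"
    by (rule integral_distr[OF T m, symmetric])
  finally show ?case using Suc pres by simp
qed simp

lemma birkhoff_avg_measurable:
  assumes T: "T \<in> M \<rightarrow>\<^sub>M M" and g: "g \<in> borel_measurable M"
  shows "(\<lambda>x. birkhoff_avg T g x n) \<in> borel_measurable M"
proof -
  have "\<And>i. (\<lambda>x. g ((T^^i) x)) \<in> borel_measurable M"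
    using measurable_compose[OF measurable_compose_n[OF T] g] by (simp add: comp_def)
  then show ?thesis unfolding birkhoff_avg_def by measurable
qed

text \<open>Integrate
  the covering bound over segments of length L, use invariance of M, and let L \<rightarrow> \<infinity>.\<close>
lemma integral_le_of_blocks:
  fixes c \<phi> :: "'a \<Rightarrow> real"
  assumes T: "T \<in> M \<rightarrow>\<^sub>M M" and pres: "distr M M T = M"
    and cm: "c \<in> borel_measurable M" and phim: "\<phi> \<in> borel_measurable M"
    and cb: "\<And>x. 0 \<le> c x \<and> c x \<le> 1" and phib: "\<And>x. 0 \<le> \<phi> x \<and> \<phi> x \<le> 1"
    and cinv: "\<And>x. c (T x) = c x"
    and blocks: "\<And>x. \<exists>k. 1 \<le> k \<and> k \<le> N \<and> (\<Sum>i<k. \<phi> ((T^^i) x)) \<ge> real k * c x"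
  shows "(\<integral>x. c x \<partial>M) \<le> (\<integral>x. \<phi> x \<partial>M)"
proof (rule ccontr)
  have phiT: "(\<lambda>x. \<phi> ((T^^i) x)) \<in> borel_measurable M" for i
    using measurable_compose[OF measurable_compose_n[OF T] phim] by (simp add: comp_def)
  have intc: "integrable M c" by (rule integrable_unit_interval[OF cm cb])
  have intphiT: "integrable M (\<lambda>x. \<phi> ((T^^i) x))" for i
    by (rule integrable_unit_interval[OF phiT]) (use phib in auto)
  have integrated: "(real L - real N) * (\<integral>x. c x \<partial>M) \<le> real L * (\<integral>x. \<phi> x \<partial>M)" for L
  proof -
    have "(real L - real N) * (\<integral>x. c x \<partial>M) = (\<integral>x. (real L - real N) * c x \<partial>M)" by simp
    also have "\<dots> \<le> (\<integral>x. (\<Sum>i<L. \<phi> ((T^^i) x)) \<partial>M)"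
      by (rule integral_mono)
         (use intc intphiT block_covering[OF _ _ cinv blocks] phib cb in auto)
    also have "\<dots> = (\<Sum>i<L. (\<integral>x. \<phi> ((T^^i) x) \<partial>M))"
      by (rule Bochner_Integration.integral_sum) (use intphiT in auto)
    also have "\<dots> = real L * (\<integral>x. \<phi> x \<partial>M)"
      using integral_funpow_preserving[OF T pres phim] by simp
    finally show ?thesis .
  qed
  have c1: "(\<integral>x. c x \<partial>M) \<le> 1"
    using integral_mono[OF intc integrable_const[of 1]] cb by (simp add: prob_space)
  assume "\<not> ?thesis"
  then have gap: "(\<integral>x. c x \<partial>M) - (\<integral>x. \<phi> x \<partial>M) > 0" by simp
  obtain L :: nat where "real N / ((\<integral>x. c x \<partial>M) - (\<integral>x. \<phi> x \<partial>M)) < real L"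
    using reals_Archimedean2 by blast
  then have "real N < real L * ((\<integral>x. c x \<partial>M) - (\<integral>x. \<phi> x \<partial>M))"
    using gap by (simp add: pos_divide_less_eq)
  also have "\<dots> \<le> real N * (\<integral>x. c x \<partial>M)" using integrated[of L] by (simp add: algebra_simps)
  also have "\<dots> \<le> real N" using c1 by (simp add: mult_left_le)
  finally show False by simp
qed

text \<open>The set of points at which none of the first N averages comes within \<delta> of the
  limsup shrinks to the empty set, so its measure is eventually small.\<close>
lemma slow_points_small:
  assumes T: "T \<in> M \<rightarrow>\<^sub>M M" and gm: "g \<in> borel_measurable M"
    and g: "\<And>x. 0 \<le> g x \<and> g x \<le> 1" and \<delta>: "\<delta> > 0" and \<epsilon>: "\<epsilon> > 0"
  shows "\<exists>N\<ge>1. measure M {x \<in> space M. \<forall>n\<in>{1..N}.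
             birkhoff_avg T g x n < Lsup (birkhoff_avg T g x) - \<delta>} < \<epsilon>"
proof -
  define H where "H x = Lsup (birkhoff_avg T g x)" for x
  define B where "B N = {x \<in> space M. \<forall>n\<in>{1..N}. birkhoff_avg T g x n < H x - \<delta>}" for N
  note [measurable] = gm birkhoff_avg_measurable[OF T gm]
  have [measurable]: "H \<in> borel_measurable M"
    unfolding H_def by (rule Lsup_borel_measurable) (rule birkhoff_avg_measurable[OF T gm])
  have "B N \<in> sets M" for N unfolding B_def by measurable
  moreover have "decseq B" by (rule decseq_SucI) (auto simp: B_def)
  moreover have "\<Inter>(range B) = {}"
  proof (rule equals0I)
    fix x assume x: "x \<in> \<Inter>(range B)"
    have "\<exists>n\<ge>1. birkhoff_avg T g x n \<ge> H x - \<delta>"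
      unfolding H_def by (rule Lsup_frequently_close[OF birkhoff_avg_bounds[OF g] \<delta>])
    then obtain n where "n \<ge> 1" "birkhoff_avg T g x n \<ge> H x - \<delta>" by blast
    then have "x \<notin> B n" unfolding B_def by (auto intro!: bexI[of _ n])
    then show False using x by blast
  qed
  ultimately have "(\<lambda>N. measure M (B N)) \<longlonglongrightarrow> 0"
    using finite_Lim_measure_decseq[of B] by (metis image_subset_iff measure_empty)
  then obtain N0 where "\<forall>N\<ge>N0. norm (measure M (B N) - 0) < \<epsilon>"
    using LIMSEQ_D[of _ 0 \<epsilon>] \<epsilon> by blast
  then have "measure M (B (Suc N0)) < \<epsilon>" by auto
  then show ?thesis unfolding B_def H_def by (intro exI[of _ "Suc N0"]) auto
qed

text \<open>Points whose first
  N averages stay below the limsup level H - \<epsilon>/4 form a set B of measure < \<epsilon>/2; adding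
  its indicator to g makes blocks of length \<le> N available everywhere.\<close>
lemma integral_Lsup_birkhoff_avg_le:
  fixes g :: "'a \<Rightarrow> real"
  assumes sp: "space M = UNIV" and T: "T \<in> M \<rightarrow>\<^sub>M M" and pres: "distr M M T = M"
    and gm: "g \<in> borel_measurable M" and g: "\<And>x. 0 \<le> g x \<and> g x \<le> 1"
  shows "(\<integral>x. Lsup (birkhoff_avg T g x) \<partial>M) \<le> (\<integral>x. g x \<partial>M)"
proof (rule field_le_epsilon)
  fix e :: real assume e: "e > 0"
  define H where "H x = Lsup (birkhoff_avg T g x)" for x
  have Hb: "0 \<le> H x \<and> H x \<le> 1" for x
    using Lsup_ereal(2,3)[OF birkhoff_avg_bounds[where g=g and T=T and x=x, OF g]] unfolding H_def by auto
  note [measurable] = gm birkhoff_avg_measurable[OF T gm]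
  have Hm[measurable]: "H \<in> borel_measurable M"
    unfolding H_def by (rule Lsup_borel_measurable) (rule birkhoff_avg_measurable[OF T gm])
  obtain N where N: "N \<ge> 1" and
    BN: "measure M {x \<in> space M. \<forall>n\<in>{1..N}. birkhoff_avg T g x n < H x - e/4} < e/2"
    using slow_points_small[OF T gm g, of "e/4" "e/2"] e unfolding H_def by auto
  define B where "B = {x \<in> space M. \<forall>n\<in>{1..N}. birkhoff_avg T g x n < H x - e/4}"
  have [measurable]: "B \<in> sets M" unfolding B_def by measurable
  define c where "c x = max (H x - e/4) 0" for x
  define \<phi> where "\<phi> x = max (g x) (indicator B x)" for x
  have cm[measurable]: "c \<in> borel_measurable M" unfolding c_def by measurable
  have phim[measurable]: "\<phi> \<in> borel_measurable M" unfolding \<phi>_def by measurable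
  have cb: "0 \<le> c x \<and> c x \<le> 1" for x using Hb[of x] e unfolding c_def by auto
  have phib: "0 \<le> \<phi> x \<and> \<phi> x \<le> 1" for x using g[of x] unfolding \<phi>_def by (auto simp: indicator_def)
  have cinv: "c (T x) = c x" for x
    unfolding c_def H_def by (simp add: Lsup_birkhoff_avg_invariant[where g=g, OF g])
  have blocks: "\<exists>k. 1 \<le> k \<and> k \<le> N \<and> (\<Sum>i<k. \<phi> ((T^^i) x)) \<ge> real k * c x" for x
  proof (cases "x \<in> B")
    case True
    then show ?thesis using cb[of x] N by (intro exI[of _ 1]) (auto simp: \<phi>_def)
  next
    case False
    then obtain n where n: "n \<in> {1..N}" "H x - e/4 \<le> (\<Sum>i<n. g ((T^^i) x)) / real n"
      unfolding B_def birkhoff_avg_def using sp by auto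
    then have "real n * (H x - e/4) \<le> (\<Sum>i<n. g ((T^^i) x))"
      by (simp add: le_divide_eq mult.commute)
    moreover have "0 \<le> (\<Sum>i<n. g ((T^^i) x))" by (rule sum_nonneg) (use g in auto)
    ultimately have "real n * c x \<le> (\<Sum>i<n. g ((T^^i) x))"
      unfolding c_def by (auto simp: max_def)
    also have "\<dots> \<le> (\<Sum>i<n. \<phi> ((T^^i) x))" by (rule sum_mono) (auto simp: \<phi>_def)
    finally show ?thesis using n by auto
  qed
  have intc: "integrable M c" by (rule integrable_unit_interval[OF cm cb])
  have intg: "integrable M g" by (rule integrable_unit_interval[OF gm g])
  have intB: "integrable M (indicator B :: 'a \<Rightarrow> real)"
    by (rule integrable_unit_interval) (auto simp: indicator_def)
  have "(\<integral>x. H x \<partial>M) \<le> (\<integral>x. c x + e/4 \<partial>M)"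
    by (rule integral_mono) (use intc integrable_unit_interval[OF Hm Hb] in \<open>auto simp: c_def\<close>)
  also have "\<dots> = (\<integral>x. c x \<partial>M) + e/4" using intc by (simp add: prob_space)
  also have "(\<integral>x. c x \<partial>M) \<le> (\<integral>x. \<phi> x \<partial>M)"
    by (rule integral_le_of_blocks[OF T pres cm phim cb phib cinv blocks])
  also have "(\<integral>x. \<phi> x \<partial>M) \<le> (\<integral>x. g x + indicator B x \<partial>M)"
    by (rule integral_mono[OF integrable_unit_interval[OF phim phib]
          Bochner_Integration.integrable_add[OF intg intB]])
       (use g in \<open>auto simp: \<phi>_def indicator_def\<close>)
  also have "\<dots> = (\<integral>x. g x \<partial>M) + measure M B"
    using Bochner_Integration.integral_add[OF intg intB] by simp
  finally show "(\<integral>x. Lsup (birkhoff_avg T g x) \<partial>M) \<le> (\<integral>x. g x \<partial>M) + e"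
    using BN e unfolding H_def B_def by linarith
qed

end

text \<open>Two-sided averages along a forward map T and a backward map U: the orbit segments
  x, ..., T^n x and x, ..., U^n x share the point x, counted once, 2n+1 points in all.\<close>
definition two_sided_avg ::
    "('x \<Rightarrow> 'x) \<Rightarrow> ('x \<Rightarrow> 'x) \<Rightarrow> ('x \<Rightarrow> real) \<Rightarrow> 'x \<Rightarrow> nat \<Rightarrow> real" where
  "two_sided_avg T U g x n =
     ((\<Sum>i<Suc n. g ((T^^i) x)) + (\<Sum>i<Suc n. g ((U^^i) x)) - g x) / (2 * real n + 1)"

lemma orbit_sum_bounds:
  assumes "\<And>x. 0 \<le> g x \<and> g x \<le> 1"
  shows "g x \<le> (\<Sum>i<Suc n. g ((U^^i) x))" "(\<Sum>i<Suc n. g ((U^^i) x)) \<le> g x + real n"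
proof -
  have split: "(\<Sum>i<Suc n. g ((U^^i) x)) = g x + (\<Sum>i<n. g ((U^^Suc i) x))"
    by (subst sum.lessThan_Suc_shift) simp
  have "0 \<le> (\<Sum>i<n. g ((U^^Suc i) x))" by (rule sum_nonneg) (use assms in auto)
  then show "g x \<le> (\<Sum>i<Suc n. g ((U^^i) x))" using split by simp
  have "(\<Sum>i<n. g ((U^^Suc i) x)) \<le> (\<Sum>i<n. 1)" by (rule sum_mono) (use assms in auto)
  then show "(\<Sum>i<Suc n. g ((U^^i) x)) \<le> g x + real n" using split by simp
qed

lemma two_sided_avg_bounds:
  assumes g: "\<And>x. 0 \<le> g x \<and> g x \<le> 1"
  shows "0 \<le> two_sided_avg T U g x n \<and> two_sided_avg T U g x n \<le> 1"
  using orbit_sum_bounds[of g, OF g, where x=x and n=n and U=T]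
    orbit_sum_bounds[of g, OF g, where x=x and n=n and U=U] g[of x]
  unfolding two_sided_avg_def by (auto simp: divide_le_eq)

lemma two_sided_avg_complement:
  "two_sided_avg T U (\<lambda>x. 1 - g x) x n = 1 - two_sided_avg T U g x n"
proof -
  have "2 * real n + 1 > 0" by simp
  then show ?thesis unfolding two_sided_avg_def by (simp add: sum_subtractf field_simps)
qed

lemma two_sided_avg_le_mean:
  assumes g: "\<And>x. 0 \<le> g x \<and> g x \<le> 1"
  shows "two_sided_avg T U g x n \<le>
     (birkhoff_avg T g x (Suc n) + birkhoff_avg U g x (Suc n)) / 2 + 1 / (2 * real n + 1)"
proof -
  define S where "S = (\<Sum>i<Suc n. g ((T^^i) x)) + (\<Sum>i<Suc n. g ((U^^i) x))"
  have S: "S \<le> 2 * real n + 2"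
    using orbit_sum_bounds(2)[of g, OF g, where x=x and n=n and U=T]
      orbit_sum_bounds(2)[of g, OF g, where x=x and n=n and U=U] g[of x]
    unfolding S_def by linarith
  have "two_sided_avg T U g x n - S / (2 * real n + 2)
      = (S - g x * (2 * real n + 2)) / ((2 * real n + 1) * (2 * real n + 2))"
    unfolding two_sided_avg_def S_def[symmetric] by (simp add: field_simps)
  also have "\<dots> \<le> (2 * real n + 2) / ((2 * real n + 1) * (2 * real n + 2))"
  proof (rule divide_right_mono)
    have "0 \<le> g x * (2 * real n + 2)" using g[of x] by simp
    then show "S - g x * (2 * real n + 2) \<le> 2 * real n + 2" using S by linarith
  qed simp
  also have "\<dots> = 1 / (2 * real n + 1)" by simp
  moreover have "S / (2 * real n + 2) =
      (birkhoff_avg T g x (Suc n) + birkhoff_avg U g x (Suc n)) / 2"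
  proof -
    have "2 * real n + 2 = real (Suc n) * 2" by simp
    then show ?thesis unfolding birkhoff_avg_def S_def
      by (simp only: divide_divide_eq_left[symmetric] add_divide_distrib)
  qed
  ultimately show ?thesis by linarith
qed

lemma Lsup_two_sided_avg_le:
  assumes g: "\<And>x. 0 \<le> g x \<and> g x \<le> 1"
  shows "Lsup (two_sided_avg T U g x)
           \<le> (Lsup (birkhoff_avg T g x) + Lsup (birkhoff_avg U g x)) / 2"
proof -
  define v where "v n = (birkhoff_avg T g x (Suc n) + birkhoff_avg U g x (Suc n)) / 2" for n
  have vb: "0 \<le> v n \<and> v n \<le> 1" for n
    using birkhoff_avg_bounds[where g=g and T=T and x=x and n="Suc n", OF g]
      birkhoff_avg_bounds[where g=g and T=U and x=x and n="Suc n", OF g]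
    unfolding v_def by auto
  have "Lsup (two_sided_avg T U g x) \<le> Lsup v"
  proof (rule Lsup_mono_approx[OF two_sided_avg_bounds[OF g] vb])
    fix e :: real assume "e > 0"
    then have "eventually (\<lambda>n. 1 / real n < e \<and> n \<ge> 1) sequentially"
      using order_tendstoD(2)[OF lim_const_over_n[of 1]] eventually_ge_at_top[of "1::nat"]
      by (intro eventually_conj) auto
    then show "eventually (\<lambda>n. two_sided_avg T U g x n \<le> v n + e) sequentially"
    proof (rule eventually_mono)
      fix n :: nat assume n: "1 / real n < e \<and> n \<ge> 1"
      have "1 / (2 * real n + 1) \<le> 1 / real n" using n by (simp add: frac_le)
      then show "two_sided_avg T U g x n \<le> v n + e"
        using two_sided_avg_le_mean[where g=g and T=T and U=U and x=x and n=n, OF g] n unfolding v_def by linarith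
    qed
  qed
  also have "Lsup v \<le> (Lsup (birkhoff_avg T g x) + Lsup (birkhoff_avg U g x)) / 2"
  proof (rule field_le_epsilon)
    fix e :: real assume e: "e > 0"
    have "eventually (\<lambda>n. birkhoff_avg V g x n < Lsup (birkhoff_avg V g x) + e) sequentially"
      for V by (rule Lsup_less[OF birkhoff_avg_bounds[OF g]]) (use e in simp)
    then have "eventually (\<lambda>n. birkhoff_avg V g x (Suc n) < Lsup (birkhoff_avg V g x) + e)
        sequentially" for V
      by (rule eventually_sequentially_Suc[THEN iffD2])
    from this[of T] this[of U]
    have "eventually (\<lambda>n. v n \<le> (Lsup (birkhoff_avg T g x) + Lsup (birkhoff_avg U g x)) / 2 + e)
        sequentially"
      by eventually_elim (simp add: v_def field_simps)
    then show "Lsup v \<le> (Lsup (birkhoff_avg T g x) + Lsup (birkhoff_avg U g x)) / 2 + e"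
      by (rule Lsup_le[OF vb])
  qed
  finally show ?thesis .
qed

context prob_space
begin

lemma Lsup_two_sided_avg_measurable:
  assumes T: "T \<in> M \<rightarrow>\<^sub>M M" and U: "U \<in> M \<rightarrow>\<^sub>M M" and g: "g \<in> borel_measurable M"
  shows "(\<lambda>x. Lsup (two_sided_avg T U g x)) \<in> borel_measurable M"
proof (rule Lsup_borel_measurable)
  have [measurable]: "(\<lambda>x. g ((V^^i) x)) \<in> borel_measurable M" if "V \<in> M \<rightarrow>\<^sub>M M" for V i
    using measurable_compose[OF measurable_compose_n[OF that] g] by (simp add: comp_def)
  note [measurable] = g T U
  show "(\<lambda>x. two_sided_avg T U g x n) \<in> borel_measurable M" for n
    unfolding two_sided_avg_def by measurable
qed

lemma integrable_Lsup_two_sided_avg: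
  assumes T: "T \<in> M \<rightarrow>\<^sub>M M" and U: "U \<in> M \<rightarrow>\<^sub>M M"
    and gm: "g \<in> borel_measurable M" and g: "\<And>x. 0 \<le> g x \<and> g x \<le> 1"
  shows "integrable M (\<lambda>x. Lsup (two_sided_avg T U g x))"
  by (rule integrable_unit_interval[OF Lsup_two_sided_avg_measurable[OF T U gm]])
     (use Lsup_ereal(2,3)[OF two_sided_avg_bounds[of g, OF g]] in auto)

lemma integral_Lsup_two_sided_avg_le:
  fixes g :: "'a \<Rightarrow> real"
  assumes sp: "space M = UNIV" and T: "T \<in> M \<rightarrow>\<^sub>M M" and pT: "distr M M T = M"
    and U: "U \<in> M \<rightarrow>\<^sub>M M" and pU: "distr M M U = M"
    and gm: "g \<in> borel_measurable M" and g: "\<And>x. 0 \<le> g x \<and> g x \<le> 1"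
  shows "(\<integral>x. Lsup (two_sided_avg T U g x) \<partial>M) \<le> (\<integral>x. g x \<partial>M)"
proof -
  have int_Lsup_avg: "integrable M (\<lambda>x. Lsup (birkhoff_avg V g x))" if "V \<in> M \<rightarrow>\<^sub>M M" for V
    by (rule integrable_unit_interval[OF Lsup_borel_measurable[OF birkhoff_avg_measurable]])
       (use that gm Lsup_ereal(2,3)[OF birkhoff_avg_bounds[of g, OF g]] in auto)
  have "(\<integral>x. Lsup (two_sided_avg T U g x) \<partial>M)
      \<le> (\<integral>x. (Lsup (birkhoff_avg T g x) + Lsup (birkhoff_avg U g x)) / 2 \<partial>M)"
    by (rule integral_mono[OF integrable_Lsup_two_sided_avg[OF T U gm g]])
       (use int_Lsup_avg[OF T] int_Lsup_avg[OF U] Lsup_two_sided_avg_le[of g, OF g] in auto)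
  also have "\<dots> = ((\<integral>x. Lsup (birkhoff_avg T g x) \<partial>M) + (\<integral>x. Lsup (birkhoff_avg U g x) \<partial>M)) / 2"
    using int_Lsup_avg[OF T] int_Lsup_avg[OF U] by simp
  also have "\<dots> \<le> (\<integral>x. g x \<partial>M)"
    using integral_Lsup_birkhoff_avg_le[OF sp T pT gm g]
      integral_Lsup_birkhoff_avg_le[OF sp U pU gm g] by simp
  finally show ?thesis .
qed

text \<open>Equality: applying the inequality also to 1 - g, whose two-sided limsup complements
  that of g to at least 1 at every point.\<close>
lemma integral_Lsup_two_sided_avg_eq:
  fixes g :: "'a \<Rightarrow> real"
  assumes sp: "space M = UNIV" and T: "T \<in> M \<rightarrow>\<^sub>M M" and pT: "distr M M T = M"
    and U: "U \<in> M \<rightarrow>\<^sub>M M" and pU: "distr M M U = M"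
    and gm: "g \<in> borel_measurable M" and g: "\<And>x. 0 \<le> g x \<and> g x \<le> 1"
  shows "(\<integral>x. Lsup (two_sided_avg T U g x) \<partial>M) = (\<integral>x. g x \<partial>M)"
proof (rule antisym)
  show "(\<integral>x. Lsup (two_sided_avg T U g x) \<partial>M) \<le> (\<integral>x. g x \<partial>M)"
    by (rule integral_Lsup_two_sided_avg_le[OF assms])
  define h where "h = (\<lambda>x. 1 - g x)"
  have hm: "h \<in> borel_measurable M" unfolding h_def using gm by measurable
  have h: "0 \<le> h x \<and> h x \<le> 1" for x using g[of x] by (auto simp: h_def)
  have ig: "integrable M g" by (rule integrable_unit_interval[OF gm g])
  note i1 = integrable_Lsup_two_sided_avg[OF T U gm g]
  note i2 = integrable_Lsup_two_sided_avg[OF T U hm h]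
  have "1 \<le> Lsup (two_sided_avg T U g x) + Lsup (two_sided_avg T U h x)" for x
    by (rule Lsup_complement_ge1[OF two_sided_avg_bounds[of g, OF g] two_sided_avg_bounds[of h, OF h]])
       (simp add: h_def two_sided_avg_complement)
  then have "(\<integral>x. 1 \<partial>M) \<le> (\<integral>x. Lsup (two_sided_avg T U g x) + Lsup (two_sided_avg T U h x) \<partial>M)"
    by (intro integral_mono) (use i1 i2 in auto)
  also have "\<dots> = (\<integral>x. Lsup (two_sided_avg T U g x) \<partial>M) + (\<integral>x. Lsup (two_sided_avg T U h x) \<partial>M)"
    by (rule Bochner_Integration.integral_add[OF i1 i2])
  also have "(\<integral>x. Lsup (two_sided_avg T U h x) \<partial>M) \<le> (\<integral>x. h x \<partial>M)"
    by (rule integral_Lsup_two_sided_avg_le[OF sp T pT U pU hm h])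
  also have "(\<integral>x. h x \<partial>M) = 1 - (\<integral>x. g x \<partial>M)"
    unfolding h_def using ig by (simp add: prob_space)
  finally show "(\<integral>x. g x \<partial>M) \<le> (\<integral>x. Lsup (two_sided_avg T U g x) \<partial>M)"
    by (simp add: prob_space)
qed

end

definition ishift :: "(int \<Rightarrow> 'a) \<Rightarrow> (int \<Rightarrow> 'a)" where
  "ishift x = (\<lambda>i. x (i - 1))"

lemma shift_ishift[simp]: "shift (ishift x) = x" "ishift (shift x) = x"
  by (auto simp: shift_def ishift_def)

lemma topspace_shift_top[simp]: "topspace shift_top = UNIV"
  by (simp add: shift_top_def)

lemma continuous_shift: "continuous_map shift_top shift_top shift"
  unfolding shift_top_def continuous_map_componentwise_UNIV
  by (auto simp: shift_def intro: continuous_map_product_projection)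

lemma continuous_ishift: "continuous_map shift_top shift_top ishift"
  unfolding shift_top_def continuous_map_componentwise_UNIV
  by (auto simp: ishift_def intro: continuous_map_product_projection)

lemma open_in_shift_borel:
  assumes "sets M = shift_borel" "openin shift_top U"
  shows "U \<in> sets M"
  using assms unfolding shift_borel_def by (auto intro: sigma_sets.Basic)

lemma continuous_shift_borel_measurable:
  fixes M :: "(int \<Rightarrow> 'a) measure" and f :: "(int \<Rightarrow> 'a) \<Rightarrow> (int \<Rightarrow> 'a)"
  assumes sp: "space M = UNIV" and s: "sets M = shift_borel"
    and f: "continuous_map shift_top shift_top f"
  shows "f \<in> M \<rightarrow>\<^sub>M M"
proof (rule measurable_sigma_sets[where \<Omega>=UNIV and A="{U. openin shift_top U}"])
  show "sets M = sigma_sets UNIV {U. openin shift_top U}" using s by (simp add: shift_borel_def)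
  fix U :: "(int \<Rightarrow> 'a) set" assume "U \<in> {U. openin shift_top U}"
  then have "openin shift_top (f -` U)"
    using openin_continuous_map_preimage[OF f] by (simp add: vimage_def)
  then show "f -` U \<inter> space M \<in> sets M" using open_in_shift_borel[OF s] sp by simp
qed auto

lemma shift_invariant_distr:
  fixes M :: "(int \<Rightarrow> 'a) measure"
  assumes sp: "space M = UNIV" and s: "sets M = shift_borel" and inv: "shift_invariant M"
  shows "distr M M shift = M" "distr M M ishift = M"
proof -
  have Tm: "shift \<in> M \<rightarrow>\<^sub>M M" by (rule continuous_shift_borel_measurable[OF sp s continuous_shift])
  have Um: "ishift \<in> M \<rightarrow>\<^sub>M M" by (rule continuous_shift_borel_measurable[OF sp s continuous_ishift])
  have vimage_shift: "shift -` A = ishift ` A" and vimage_ishift: "ishift -` A = shift ` A"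
    for A :: "(int \<Rightarrow> 'a) set"
    by (auto simp: image_iff) (metis shift_ishift)+
  have ishift_sets: "ishift ` A \<in> sets M" if "A \<in> sets M" for A
    using measurable_sets[OF Tm that] sp vimage_shift by simp
  show "distr M M shift = M"
  proof (rule measure_eqI)
    fix A assume "A \<in> sets (distr M M shift)"
    then have A: "A \<in> sets M" by simp
    have "shift ` ishift ` A = A" by (auto simp: image_image)
    then have "emeasure M (ishift ` A) = emeasure M A"
      using inv ishift_sets[OF A] unfolding shift_invariant_def by metis
    then show "emeasure (distr M M shift) A = emeasure M A"
      using emeasure_distr[OF Tm A] sp vimage_shift by simp
  qed simp
  show "distr M M ishift = M"
  proof (rule measure_eqI)
    fix A assume "A \<in> sets (distr M M ishift)"
    then have A: "A \<in> sets M" by simp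
    then show "emeasure (distr M M ishift) A = emeasure M A"
      using emeasure_distr[OF Um A] sp vimage_ishift inv unfolding shift_invariant_def by simp
  qed simp
qed

text \<open>The configurations where two continuous maps disagree at a given cell form a Borel
  set: the cell value is a continuous map into the finite discrete alphabet.\<close>
lemma disagreement_set_measurable:
  fixes M :: "(int \<Rightarrow> 'a::finite) measure" and c d :: "(int \<Rightarrow> 'a) \<Rightarrow> (int \<Rightarrow> 'a)"
  assumes s: "sets M = shift_borel"
    and c: "continuous_map shift_top shift_top c" and d: "continuous_map shift_top shift_top d"
  shows "{x. c x i \<noteq> d x i} \<in> sets M"
proof -
  have cell_open: "openin shift_top {x. F x i = a}"
    if F: "continuous_map shift_top shift_top F" for F :: "(int \<Rightarrow> 'a) \<Rightarrow> (int \<Rightarrow> 'a)" and a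
  proof -
    have "continuous_map shift_top (discrete_topology UNIV) (\<lambda>y::int \<Rightarrow> 'a. y i)"
      unfolding shift_top_def by (rule continuous_map_product_projection) auto
    from continuous_map_compose[OF F this]
    have "continuous_map shift_top (discrete_topology UNIV) (\<lambda>x. F x i)" by (simp add: comp_def)
    from openin_continuous_map_preimage[OF this, of "{a}"] show ?thesis by simp
  qed
  have "{x. c x i \<noteq> d x i} = (\<Union>a. \<Union>b\<in>-{a}. {x. c x i = a} \<inter> {x. d x i = b})" by auto
  also have "\<dots> \<in> sets M"
    using open_in_shift_borel[OF s cell_open[OF c]] open_in_shift_borel[OF s cell_open[OF d]]
    by (intro sets.finite_UN sets.Int) auto
  finally show ?thesis .
qed

lemma CA_shift_funpow:
  assumes "is_CA F" shows "F ((shift^^k) x) = (shift^^k) (F x)"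
  using assms by (induction k) (auto simp: is_CA_def)

lemma CA_ishift_funpow:
  assumes "is_CA F" shows "F ((ishift^^k) x) = (ishift^^k) (F x)"
proof -
  have "F (ishift y) = ishift (F y)" for y
    using assms unfolding is_CA_def by (metis shift_ishift)
  then show ?thesis by (induction k) auto
qed

lemma shift_funpow_apply: "(shift^^k) y j = y (j + int k)"
  by (induction k arbitrary: j) (auto simp: shift_def algebra_simps)

lemma ishift_funpow_apply: "(ishift^^k) y j = y (j - int k)"
  by (induction k arbitrary: j) (auto simp: ishift_def algebra_simps)

lemma sum_symmetric_window:
  fixes f :: "int \<Rightarrow> real"
  shows "(\<Sum>i\<in>{-int n..int n}. f i) = (\<Sum>k<Suc n. f (int k)) + (\<Sum>k<Suc n. f (- int k)) - f 0"
proof (induction n)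
  case (Suc n)
  have "{- int (Suc n)..int (Suc n)} = insert (int n + 1) (insert (- int n - 1) {-int n..int n})"
    by auto
  then have "(\<Sum>i\<in>{- int (Suc n)..int (Suc n)}. f i)
      = f (int n + 1) + f (- int n - 1) + (\<Sum>i\<in>{-int n..int n}. f i)"
    by simp
  moreover have "- int n - 1 = - 1 - int n" by simp
  ultimately show ?case using Suc by (simp add: algebra_simps)
qed simp

lemma card_window_as_sum:
  "real (card {i::int. \<bar>i\<bar> \<le> int n \<and> P i}) = (\<Sum>i\<in>{-int n..int n}. if P i then 1 else 0)"
proof -
  have "{i::int. \<bar>i\<bar> \<le> int n \<and> P i} = {i \<in> {-int n..int n}. P i}" by auto
  then have "real (card {i::int. \<bar>i\<bar> \<le> int n \<and> P i}) = (\<Sum>i\<in>{i \<in> {-int n..int n}. P i}. 1)"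
    by simp
  also have "\<dots> = (\<Sum>i\<in>{-int n..int n}. if P i then 1 else 0)"
    by (rule sum.inter_filter) simp
  finally show ?thesis .
qed

lemma besicovitch_CA_two_sided_avg:
  assumes c: "is_CA c" and d: "is_CA d"
  shows "besicovitch (c x) (d x) = Lsup (two_sided_avg shift ishift (indicator {y. c y 0 \<noteq> d y 0}) x)"
proof -
  define g :: "(int \<Rightarrow> 'a) \<Rightarrow> real" where "g = indicator {y. c y 0 \<noteq> d y 0}"
  define f where "f i = (if c x i \<noteq> d x i then 1 else 0 :: real)" for i
  have "g ((shift^^k) x) = f (int k)" for k
    by (simp add: g_def f_def CA_shift_funpow[OF c] CA_shift_funpow[OF d] shift_funpow_apply)
  moreover have "g ((ishift^^k) x) = f (- int k)" for k
    by (simp add: g_def f_def CA_ishift_funpow[OF c] CA_ishift_funpow[OF d] ishift_funpow_apply)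
  moreover have "g x = f 0" by (simp add: g_def f_def)
  ultimately have "real (card {i::int. \<bar>i\<bar> \<le> int n \<and> c x i \<noteq> d x i}) / (2 * real n + 1)
      = two_sided_avg shift ishift g x n" for n
    unfolding two_sided_avg_def card_window_as_sum sum_symmetric_window f_def by simp
  then show ?thesis unfolding besicovitch_def Lsup_def g_def by simp
qed

theorem mainTheorem20:
  fixes M :: "(int \<Rightarrow> 'a::finite) measure"
    and c d :: "(int \<Rightarrow> 'a) \<Rightarrow> (int \<Rightarrow> 'a)"
  assumes "CARD('a) \<ge> 2"
    and "prob_space M"
    and "space M = UNIV"
    and "sets M = shift_borel"
    and "shift_invariant M"
    and "is_CA c" and "is_CA d"
  shows "(\<integral>x. besicovitch (c x) (d x) \<partial>M) = measure M {x. c x 0 \<noteq> d x 0}"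
proof -
  interpret prob_space M by fact
  define E where "E = {x. c x 0 \<noteq> d x 0}"
  have E: "E \<in> sets M"
    unfolding E_def using assms(4,6,7) by (intro disagreement_set_measurable) (auto simp: is_CA_def)
  have shift_M: "shift \<in> M \<rightarrow>\<^sub>M M" and ishift_M: "ishift \<in> M \<rightarrow>\<^sub>M M"
    by (rule continuous_shift_borel_measurable[OF assms(3,4) continuous_shift],
        rule continuous_shift_borel_measurable[OF assms(3,4) continuous_ishift])
  note preserved = shift_invariant_distr[OF assms(3,4,5)]
  have "(\<integral>x. besicovitch (c x) (d x) \<partial>M)
      = (\<integral>x. Lsup (two_sided_avg shift ishift (indicator E) x) \<partial>M)"
    unfolding E_def using besicovitch_CA_two_sided_avg[OF assms(6,7)] by simp
  also have "\<dots> = (\<integral>x. indicator E x \<partial>M)"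
    by (rule integral_Lsup_two_sided_avg_eq[OF assms(3) shift_M preserved(1) ishift_M preserved(2)])
       (use E in \<open>simp_all add: indicator_def\<close>)
  also have "\<dots> = measure M E" using E by simp
  finally show ?thesis unfolding E_def .
qed

end
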